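(* For every qutrit state $\rho$ (density operator on $\mathbb{C}^3$), $C_{\mathcal{F}}(\rho)=\overline{C}_{\mathcal{R}}(\rho)$.
   Context: Fix the computational basis $\{|i\rangle\}_{i=0}^{d-1}$ of $\mathbb{C}^d$ (here $d=3$) as the incoherent basis; $\mathcal{I}$ denotes the set of density operators diagonal in this basis. Let $|\phi^+\rangle=\frac{1}{\sqrt d}\sum_i|i\rangle$ and $\mathcal{U}_d$ the set of diagonal unitaries. The quantum coherence fraction is $C_{\mathcal{F}}(\rho)=\max_{U\in\mathcal{U}_d}\langle\phi^+|U^\dagger\rho U|\phi^+\rangle$. The robustness of coherence is $C_{\mathcal{R}}(\rho)=\min\{s\ge0: \exists\text{ density operator }\tau,\ (\rho+s\tau)/(1+s)\in\mathcal{I}\}$, and $\overline{C}_{\mathcal{R}}(\rho)=(1+C_{\mathcal{R}}(\rho))/d$. *)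

theory Defs
  imports "HOL-Analysis.Analysis"
begin

text \<open>Operators on C^d are d x d complex matrices indexed by a finite type 'n
  (d = CARD('n)); the computational basis is the standard basis of the index type.\<close>

definition hermitian_op :: "complex^'n^'n \<Rightarrow> bool" where
  "hermitian_op A \<longleftrightarrow> (\<forall>i j. A$i$j = cnj (A$j$i))"

definition quad_form :: "complex^'n^'n \<Rightarrow> complex^'n \<Rightarrow> complex" where
  "quad_form A v = (\<Sum>i\<in>UNIV. \<Sum>j\<in>UNIV. cnj (v$i) * A$i$j * v$j)"

definition trace_op :: "complex^'n^'n \<Rightarrow> complex" where
  "trace_op A = (\<Sum>i\<in>UNIV. A$i$i)"

definition density_op :: "complex^'n^'n \<Rightarrow> bool" where
  "density_op A \<longleftrightarrow> hermitian_op A \<and> (\<forall>v. 0 \<le> Re (quad_form A v)) \<and> trace_op A = 1"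

definition incoherent :: "complex^'n^'n \<Rightarrow> bool" where
  "incoherent A \<longleftrightarrow> density_op A \<and> (\<forall>i j. i \<noteq> j \<longrightarrow> A$i$j = 0)"

text \<open>Diagonal unitaries U = diag(u) with |u_i| = 1; phi+ = (1/sqrt d) sum_i |i>.
  Then <phi+| U^dagger rho U |phi+> = (1/d) sum_{i,j} cnj(u_i) rho_ij u_j.\<close>
definition max_coh_vec :: "'n::finite itself \<Rightarrow> complex^'n" where
  "max_coh_vec _ = (\<chi> i. complex_of_real (1 / sqrt (real CARD('n))))"

definition diag_op :: "complex^'n \<Rightarrow> complex^'n^'n" where
  "diag_op u = (\<chi> i j. if i = j then u$i else 0)"

definition adjoint_op :: "complex^'n^'n \<Rightarrow> complex^'n^'n" where
  "adjoint_op A = (\<chi> i j. cnj (A$j$i))"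

definition coherence_fraction :: "complex^'n::finite^'n \<Rightarrow> real" where
  "coherence_fraction \<rho> =
     Sup {Re (quad_form (adjoint_op (diag_op u) ** \<rho> ** diag_op u) (max_coh_vec TYPE('n)))
          | u :: complex^'n. \<forall>i. cmod (u$i) = 1}"

definition robustness :: "complex^'n^'n \<Rightarrow> real" where
  "robustness \<rho> = Inf {s::real. 0 \<le> s \<and>
     (\<exists>\<tau>. density_op \<tau> \<and> incoherent ((1 / (1 + s)) *\<^sub>R (\<rho> + s *\<^sub>R \<tau>)))}"

definition robustness_bar :: "complex^'n::finite^'n \<Rightarrow> real" where
  "robustness_bar \<rho> = (1 + robustness \<rho>) / real CARD('n)"

end

theory Submission
  imports Defs
begin

text \<open>
  Let \<open>m\<close> be the maximum of \<open>Re \<langle>w|\<rho>|w\<rangle>\<close> over the torus of phase vectors, attained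
  at \<open>u\<close>; the coherence fraction is \<open>m / 3\<close>. If \<open>\<rho> + s\<tau>\<close> is diagonal, evaluating its
  quadratic form at \<open>u\<close> gives \<open>m \<le> 1 + s\<close>. Conversely,
  \<open>L = diag (Re (cnj u\<^sub>i (\<rho>u)\<^sub>i)) - \<rho>\<close> makes \<open>\<rho> + L\<close> diagonal, has trace
  \<open>m - 1\<close>, and its form equals \<open>m - Re \<langle>w|\<rho>|w\<rangle> \<ge> 0\<close> on the torus. Stationarity of the
  maximiser gives \<open>L u = 0\<close>, so the form of \<open>L\<close> is invariant under \<open>v \<mapsto> v + \<lambda>u\<close>.
  In dimension 3 every \<open>v\<close> is, up to such a shift and a positive factor, a phase vector:
  the three points \<open>cnj u\<^sub>i v\<^sub>i\<close> of the plane lie on a circle (collinear ones in the limit).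
  Hence \<open>L\<close> is positive semidefinite and the robustness is exactly \<open>m - 1\<close>.
\<close>

section \<open>Quadratic forms and traces\<close>

lemma quad_form_add: "quad_form (A + B) v = quad_form A v + quad_form B v"
  by (simp add: quad_form_def distrib_left distrib_right sum.distrib)

lemma quad_form_diff: "quad_form (A - B) v = quad_form A v - quad_form B v"
  by (simp add: quad_form_def right_diff_distrib left_diff_distrib sum_subtractf)

lemma quad_form_scaleR: "quad_form (r *\<^sub>R A) v = of_real r * quad_form A v"
  unfolding quad_form_def vector_scaleR_component unfolding scaleR_conv_of_real
  by (simp add: sum_distrib_left mult_ac)

lemma quad_form_scale: "quad_form A (c *s v) = of_real ((cmod c)\<^sup>2) * quad_form A v"
  unfolding quad_form_def complex_norm_square by (simp add: sum_distrib_left mult_ac)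

lemma trace_op_add: "trace_op (A + B) = trace_op A + trace_op B"
  by (simp add: trace_op_def sum.distrib)

lemma trace_op_scaleR: "trace_op (r *\<^sub>R A) = of_real r * trace_op A"
  unfolding trace_op_def vector_scaleR_component unfolding scaleR_conv_of_real
  by (simp add: sum_distrib_left)

lemma hermitian_op_add:
  assumes "hermitian_op A" "hermitian_op B"
  shows "hermitian_op (A + B)"
  unfolding hermitian_op_def
proof (intro allI)
  fix i j
  show "(A + B)$i$j = cnj ((A + B)$j$i)"
    using assms[unfolded hermitian_op_def, rule_format, of i j] by simp
qed

lemma hermitian_op_diff:
  assumes "hermitian_op A" "hermitian_op B"
  shows "hermitian_op (A - B)"
  unfolding hermitian_op_def
proof (intro allI)
  fix i j
  show "(A - B)$i$j = cnj ((A - B)$j$i)"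
    using assms[unfolded hermitian_op_def, rule_format, of i j] by simp
qed

lemma hermitian_op_scaleR:
  assumes "hermitian_op A"
  shows "hermitian_op (r *\<^sub>R A)"
  unfolding hermitian_op_def
proof (intro allI)
  fix i j
  show "(r *\<^sub>R A)$i$j = cnj ((r *\<^sub>R A)$j$i)"
    using assms[unfolded hermitian_op_def, rule_format, of i j]
    by (simp only: vector_scaleR_component) (simp add: scaleR_conv_of_real)
qed

lemma hermitian_op_diag_real: "hermitian_op (diag_op (\<chi> i. complex_of_real (c i)))"
  by (simp add: hermitian_op_def diag_op_def)

lemma matrix_mult_diag_op: "(X ** diag_op u)$i$j = X$i$j * (u$j :: complex)"
proof -
  have "(X ** diag_op u)$i$j = (\<Sum>k\<in>UNIV. if k = j then X$i$j * u$j else 0)"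
    unfolding matrix_matrix_mult_def diag_op_def vec_lambda_beta by (intro sum.cong) auto
  then show ?thesis
    by simp
qed

lemma diag_op_matrix_mult: "(diag_op u ** X)$i$j = (u$i :: complex) * X$i$j"
proof -
  have "(diag_op u ** X)$i$j = (\<Sum>k\<in>UNIV. if k = i then u$i * X$i$j else 0)"
    unfolding matrix_matrix_mult_def diag_op_def vec_lambda_beta by (intro sum.cong) auto
  then show ?thesis
    by simp
qed

lemma diag_op_mult_vec: "(diag_op c *v v)$i = c$i * (v$i :: complex)"
proof -
  have "(diag_op c *v v)$i = (\<Sum>k\<in>UNIV. if k = i then c$i * v$i else 0)"
    unfolding matrix_vector_mult_def diag_op_def vec_lambda_beta by (intro sum.cong) auto
  then show ?thesis
    by simp
qed

lemma adjoint_op_diag_op: "adjoint_op (diag_op u) = diag_op (\<chi> i. cnj (u$i))"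
  by (simp add: vec_eq_iff adjoint_op_def diag_op_def)

lemma quad_form_axis: "quad_form A (axis k x) = cnj x * A$k$k * x"
  unfolding quad_form_def axis_def vec_lambda_beta
  by (simp add: if_distrib[where f = cnj] if_distrib[where f = "\<lambda>y. y * _"]
      if_distrib[where f = "\<lambda>y. _ * y"] cong: if_cong)

lemma quad_form_eq_sum_matrix_vector: "quad_form A u = (\<Sum>i\<in>UNIV. cnj (u$i) * (A *v u)$i)"
  by (simp add: quad_form_def matrix_vector_mult_def sum_distrib_left mult.assoc)

lemma sum_Re_cnj_mult_matrix_vector: "(\<Sum>i\<in>UNIV. Re (cnj (u$i) * (A *v u)$i)) = Re (quad_form A u)"
  by (simp only: quad_form_eq_sum_matrix_vector Re_sum)

lemma Re_cnj_mult: "Re (cnj a * b) = inner a b"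
  by (simp add: inner_complex_def)

lemma inner_matrix_vector_mult:
  "inner x (A *v y) = Re (\<Sum>i\<in>UNIV. \<Sum>j\<in>UNIV. cnj (x$i) * A$i$j * y$j)"
  by (simp add: inner_vec_def matrix_vector_mult_def sum_distrib_left mult.assoc flip: Re_cnj_mult)

lemma Re_quad_form_eq_inner: "Re (quad_form A v) = inner v (A *v v)"
  by (simp add: quad_form_def inner_matrix_vector_mult)

lemma hermitian_op_inner_commute:
  assumes "hermitian_op A"
  shows "inner x (A *v y) = inner (A *v x) y"
proof -
  have A: "cnj (A$j$i) = A$i$j" for i j
    using assms unfolding hermitian_op_def by (metis complex_cnj_cnj)
  have "inner (A *v x) y = inner y (A *v x)"
    by (rule inner_commute)
  also have "\<dots> = Re (cnj (\<Sum>j\<in>UNIV. \<Sum>i\<in>UNIV. cnj (y$j) * A$j$i * x$i))"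
    by (simp only: inner_matrix_vector_mult cnj.sel(1))
  also have "\<dots> = Re (\<Sum>j\<in>UNIV. \<Sum>i\<in>UNIV. cnj (x$i) * A$i$j * y$j)"
    unfolding cnj_sum complex_cnj_mult complex_cnj_cnj A by (simp only: mult_ac)
  also have "\<dots> = inner x (A *v y)"
    unfolding inner_matrix_vector_mult by (subst sum.swap) (rule refl)
  finally show ?thesis ..
qed

lemma Re_quad_form_add:
  assumes "hermitian_op A"
  shows "Re (quad_form A (v + w)) = Re (quad_form A v) + 2 * inner w (A *v v) + Re (quad_form A w)"
proof -
  have "inner v (A *v w) = inner w (A *v v)"
    unfolding hermitian_op_inner_commute[OF assms, of v w] by (rule inner_commute)
  then show ?thesis
    unfolding Re_quad_form_eq_inner matrix_vector_right_distrib inner_add_left inner_add_right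
    by linarith
qed

lemma Re_quad_form_add_kernel:
  assumes "hermitian_op A" "A *v z = 0"
  shows "Re (quad_form A (v + z)) = Re (quad_form A v)"
proof -
  have "inner z (A *v v) = 0"
    unfolding hermitian_op_inner_commute[OF assms(1), of z v] assms(2) by simp
  then show ?thesis
    unfolding Re_quad_form_add[OF assms(1)] Re_quad_form_eq_inner[of A z] assms(2) by simp
qed

definition psd_op :: "complex^'n^'n \<Rightarrow> bool" where
  "psd_op A \<longleftrightarrow> hermitian_op A \<and> (\<forall>v. 0 \<le> Re (quad_form A v))"

lemma density_op_iff_psd_op: "density_op A \<longleftrightarrow> psd_op A \<and> trace_op A = 1"
  by (auto simp: density_op_def psd_op_def)

lemma psd_op_add: "psd_op A \<Longrightarrow> psd_op B \<Longrightarrow> psd_op (A + B)"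
  by (simp add: psd_op_def hermitian_op_add quad_form_add)

lemma psd_op_scaleR: "psd_op A \<Longrightarrow> 0 \<le> r \<Longrightarrow> psd_op (r *\<^sub>R A)"
  by (simp add: psd_op_def hermitian_op_scaleR quad_form_scaleR)

lemma trace_op_psd_op:
  assumes "psd_op A"
  shows "trace_op A = complex_of_real (Re (trace_op A))" "0 \<le> Re (trace_op A)"
proof -
  have "A$i$i = cnj (A$i$i)" for i
    using assms unfolding psd_op_def hermitian_op_def by blast
  then have "Im (A$i$i) = 0" for i
    by (metis cnj.sel(2) neg_equal_zero)
  moreover have "0 \<le> Re (A$i$i)" for i
    using assms quad_form_axis[of A i 1] unfolding psd_op_def by (metis complex_cnj_one mult_1 mult_1_right)
  ultimately show "trace_op A = complex_of_real (Re (trace_op A))" "0 \<le> Re (trace_op A)"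
    by (simp_all add: trace_op_def complex_eq_iff sum_nonneg)
qed

lemma density_op_scaleR_inverse_trace:
  assumes "psd_op A" "trace_op A = complex_of_real t" "t \<noteq> 0"
  shows "density_op ((1 / t) *\<^sub>R A)"
  using assms trace_op_psd_op(2)[OF assms(1)]
  by (simp add: density_op_iff_psd_op psd_op_scaleR trace_op_scaleR flip: of_real_mult)

section \<open>The phase torus\<close>

definition torus :: "(complex^'n) set" where
  "torus = {u. \<forall>i. cmod (u$i) = 1}"

lemma mem_torus: "u \<in> torus \<longleftrightarrow> (\<forall>i. cmod (u$i) = 1)"
  by (simp add: torus_def)

lemma cnj_mult_self_unimodular: "cmod z = 1 \<Longrightarrow> cnj z * z = 1"
  by (metis complex_norm_square mult.commute of_real_1 power_one)

lemma torus_cnj_mult_self: "u \<in> torus \<Longrightarrow> cnj (u$i) * u$i = 1"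
  by (simp add: mem_torus cnj_mult_self_unimodular)

lemma compact_torus: "compact torus"
  unfolding compact_eq_bounded_closed
proof
  show "bounded (torus :: (complex^'n) set)"
    unfolding bounded_iff
  proof (intro exI ballI)
    fix x :: "complex^'n"
    assume "x \<in> torus"
    have "norm x \<le> (\<Sum>i\<in>UNIV. norm (x$i))"
      unfolding norm_vec_def by (rule L2_set_le_sum) simp
    then show "norm x \<le> CARD('n)"
      using \<open>x \<in> torus\<close> by (simp add: mem_torus)
  qed
  show "closed (torus :: (complex^'n) set)"
    unfolding torus_def by (intro closed_Collect_all closed_Collect_eq continuous_intros)
qed

lemma quad_form_attains_max_on_torus:
  obtains u where "u \<in> torus" "\<And>w. w \<in> torus \<Longrightarrow> Re (quad_form A w) \<le> Re (quad_form A u)"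
proof -
  have "(\<chi> i. 1) \<in> torus"
    by (simp add: mem_torus)
  moreover have "continuous_on torus (\<lambda>u. Re (quad_form A u))"
    unfolding quad_form_def by (intro continuous_intros)
  ultimately show ?thesis
    using continuous_attains_sup[OF compact_torus] that by blast
qed

lemma quad_form_diagonal_torus:
  assumes "\<And>i j. i \<noteq> j \<Longrightarrow> N$i$j = 0" "u \<in> torus"
  shows "quad_form N u = trace_op N"
proof -
  have "(\<Sum>j\<in>UNIV. cnj (u$i) * N$i$j * u$j) = N$i$i" for i
  proof -
    have "(\<Sum>j\<in>UNIV. cnj (u$i) * N$i$j * u$j) = (\<Sum>j\<in>UNIV. if j = i then cnj (u$i) * u$i * N$i$i else 0)"
      using assms(1) by (intro sum.cong) auto
    then show ?thesis
      using torus_cnj_mult_self[OF assms(2)] by simp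
  qed
  then show ?thesis
    by (simp add: quad_form_def trace_op_def)
qed

lemma quad_form_conj_diag_max_coh_vec:
  "quad_form (adjoint_op (diag_op u) ** \<rho> ** diag_op u) (max_coh_vec TYPE('n)) =
     quad_form \<rho> u / of_nat CARD('n::finite)"
proof -
  have entry: "(adjoint_op (diag_op u) ** \<rho> ** diag_op u)$i$j = cnj (u$i) * \<rho>$i$j * u$j" for i j
    by (simp add: adjoint_op_diag_op matrix_mult_diag_op diag_op_matrix_mult)
  have "cnj c * c = 1 / of_nat CARD('n)" if "c = complex_of_real (1 / sqrt (real CARD('n)))" for c
    using that by (simp flip: of_real_mult)
  then show ?thesis
    by (simp add: quad_form_def entry max_coh_vec_def sum_distrib_left divide_inverse mult_ac)
qed

lemma coherence_fraction_eq_max: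
  fixes \<rho> :: "complex^'n::finite^'n"
  assumes "u \<in> torus" "\<And>w. w \<in> torus \<Longrightarrow> Re (quad_form \<rho> w) \<le> Re (quad_form \<rho> u)"
  shows "coherence_fraction \<rho> = Re (quad_form \<rho> u) / CARD('n)"
  unfolding coherence_fraction_def quad_form_conj_diag_max_coh_vec
proof (rule cSup_eq_maximum)
  show "Re (quad_form \<rho> u) / CARD('n) \<in> {Re (quad_form \<rho> w / of_nat CARD('n)) | w. \<forall>i. cmod (w$i) = 1}"
    using assms(1) by (auto simp: mem_torus)
qed (use assms(2) in \<open>auto simp: mem_torus divide_right_mono\<close>)

lemma Im_eq_0_if_rotations_le:
  assumes "\<And>z. cmod z = 1 \<Longrightarrow> Re (cnj z * s) \<le> Re s"
  shows "Im s = 0"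
proof (cases "s = 0")
  case False
  have "cnj (s / cmod s) * s = cnj s * s / cmod s"
    by simp
  also have "\<dots> = cmod s"
    using False by (simp add: mult.commute power2_eq_square flip: complex_norm_square)
  finally have "cmod s \<le> Re s"
    using assms[of "s / cmod s"] False by (simp add: norm_divide)
  then have "(Re s)\<^sup>2 + (Im s)\<^sup>2 \<le> (Re s)\<^sup>2"
    unfolding cmod_power2[symmetric] by (simp add: power_mono)
  then show ?thesis
    by simp
qed simp

lemma quad_form_torus_max_stationary:
  assumes herm: "hermitian_op A" and u: "u \<in> torus"
    and max: "\<And>w. w \<in> torus \<Longrightarrow> Re (quad_form A w) \<le> Re (quad_form A u)"
  shows "Im (cnj (u$k) * (A *v u)$k) = 0"
proof -
  have real_diag: "Im (A$k$k) = 0"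
    using herm unfolding hermitian_op_def by (metis cnj.sel(2) neg_equal_zero)
  define g where "g = cnj (u$k) * (A *v u)$k"
  have "Im (g - A$k$k) = 0"
  proof (rule Im_eq_0_if_rotations_le)
    fix z :: complex
    assume z: "cmod z = 1"
    define x where "x = (z - 1) * u$k"
    have "u + axis k x \<in> torus"
      using u z by (auto simp: mem_torus axis_def x_def algebra_simps norm_mult)
    then have "Re (quad_form A (u + axis k x)) \<le> Re (quad_form A u)"
      by (rule max)
    then have "2 * inner (axis k x) (A *v u) + Re (quad_form A (axis k x)) \<le> 0"
      unfolding Re_quad_form_add[OF herm] by simp
    moreover have "inner (axis k x) (A *v u) = Re ((cnj z - 1) * g)"
      by (simp add: inner_axis' x_def g_def mult_ac flip: Re_cnj_mult)
    moreover have "cnj x * x = (cnj z * z - z - cnj z + 1) * (cnj (u$k) * u$k)"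
      by (simp add: x_def algebra_simps)
    then have "Re (cnj x * x) = 2 - 2 * Re z"
      using torus_cnj_mult_self[OF u] cnj_mult_self_unimodular[OF z] by simp
    moreover have "Re (quad_form A (axis k x)) = Re (cnj x * x) * Re (A$k$k)"
      using real_diag by (simp add: quad_form_axis algebra_simps)
    \<comment> \<open>as \<open>|z - 1|\<^sup>2 = 2 - 2 Re z\<close>, the second-order term is linear in \<open>z\<close> too\<close>
    ultimately have "2 * Re ((cnj z - 1) * g) + (2 - 2 * Re z) * Re (A$k$k) \<le> 0"
      by simp
    then show "Re (cnj z * (g - A$k$k)) \<le> Re (g - A$k$k)"
      using real_diag by (simp add: algebra_simps)
  qed
  then show ?thesis
    using real_diag by (simp add: g_def)
qed

section \<open>The phase Laplacian of a maximiser\<close>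

definition phase_laplacian :: "complex^'n^'n \<Rightarrow> complex^'n \<Rightarrow> complex^'n^'n" where
  "phase_laplacian A u = diag_op (\<chi> i. complex_of_real (Re (cnj (u$i) * (A *v u)$i))) - A"

lemma hermitian_op_phase_laplacian: "hermitian_op A \<Longrightarrow> hermitian_op (phase_laplacian A u)"
  unfolding phase_laplacian_def by (intro hermitian_op_diff hermitian_op_diag_real)

lemma phase_laplacian_add_offdiag: "i \<noteq> j \<Longrightarrow> (A + phase_laplacian A u)$i$j = 0"
  by (simp add: phase_laplacian_def diag_op_def)

lemma trace_op_phase_laplacian:
  "Re (trace_op (phase_laplacian A u)) = Re (quad_form A u) - Re (trace_op A)"
proof -
  have "Re (trace_op (phase_laplacian A u)) = (\<Sum>i\<in>UNIV. Re (cnj (u$i) * (A *v u)$i)) - Re (trace_op A)"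
    by (simp add: phase_laplacian_def trace_op_def diag_op_def sum_subtractf)
  then show ?thesis
    unfolding sum_Re_cnj_mult_matrix_vector .
qed

lemma Re_quad_form_phase_laplacian:
  assumes "w \<in> torus"
  shows "Re (quad_form (phase_laplacian A u) w) = Re (quad_form A u) - Re (quad_form A w)"
proof -
  have "quad_form (diag_op c) w = trace_op (diag_op c)" for c
    using assms by (intro quad_form_diagonal_torus) (simp_all add: diag_op_def)
  then have "Re (quad_form (phase_laplacian A u) w) = (\<Sum>i\<in>UNIV. Re (cnj (u$i) * (A *v u)$i)) - Re (quad_form A w)"
    by (simp add: phase_laplacian_def quad_form_diff trace_op_def diag_op_def)
  then show ?thesis
    unfolding sum_Re_cnj_mult_matrix_vector .
qed

lemma phase_laplacian_kernel:
  assumes "u \<in> torus" "\<And>k. Im (cnj (u$k) * (A *v u)$k) = 0"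
  shows "phase_laplacian A u *v u = 0"
proof -
  have key: "complex_of_real (Re (cnj (u$k) * (A *v u)$k)) * u$k = (A *v u)$k" for k
  proof -
    have "complex_of_real (Re (cnj (u$k) * (A *v u)$k)) = cnj (u$k) * (A *v u)$k"
      using assms(2) by (simp add: complex_eq_iff)
    moreover have "cnj (u$k) * u$k = 1"
      using assms(1) by (rule torus_cnj_mult_self)
    ultimately show ?thesis
      by algebra
  qed
  have "(phase_laplacian A u *v u)$k = 0" for k
    unfolding phase_laplacian_def matrix_vector_mult_diff_rdistrib vector_minus_component
      diag_op_mult_vec vec_lambda_beta key by simp
  then show ?thesis
    by (simp add: vec_eq_iff)
qed

lemma quad_form_nonneg_if_concyclic:
  assumes herm: "hermitian_op A" and u: "u \<in> torus" and ker: "A *v u = 0"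
    and torus_nonneg: "\<forall>w\<in>torus. 0 \<le> Re (quad_form A w)"
    and r: "r > 0" and circle: "\<And>i. cmod (cnj (u$i) * v$i - c) = r"
  shows "0 \<le> Re (quad_form A v)"
proof -
  define w where "w = complex_of_real (1 / r) *s (v - c *s u)"
  have "w$i = complex_of_real (1 / r) * (u$i * (cnj (u$i) * v$i - c))" for i
  proof -
    have "u$i * cnj (u$i) = 1"
      using torus_cnj_mult_self[OF u] by (simp add: mult.commute)
    then have "v$i - c * u$i = u$i * (cnj (u$i) * v$i - c)"
      by algebra
    then show ?thesis
      by (simp only: w_def vector_smult_component vector_minus_component)
  qed
  then have "w \<in> torus"
    using u r circle by (simp add: mem_torus norm_mult norm_divide)
  moreover have "v = complex_of_real r *s w + c *s u"
    using r by (simp add: w_def vec_eq_iff)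
  moreover have "A *v (c *s u) = 0"
    by (simp add: vector_scalar_commute ker)
  ultimately show ?thesis
    using torus_nonneg by (simp add: Re_quad_form_add_kernel[OF herm] quad_form_scale)
qed

section \<open>Dimension three: three points lie on a circle\<close>

lemma norm_diff_eq_norm_iff:
  fixes z c :: complex
  shows "cmod (z - c) = cmod c \<longleftrightarrow> 2 * inner z c = (cmod z)\<^sup>2"
proof -
  have "(cmod (z - c))\<^sup>2 = (cmod z)\<^sup>2 - 2 * inner z c + (cmod c)\<^sup>2"
    unfolding cmod_power2 inner_complex_def by (simp add: power2_eq_square algebra_simps)
  moreover have "cmod (z - c) = cmod c \<longleftrightarrow> (cmod (z - c))\<^sup>2 = (cmod c)\<^sup>2"
    by (simp add: power2_eq_iff_nonneg)
  ultimately show ?thesis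
    by auto
qed

lemma non_collinear_concyclic:
  fixes y1 y2 y3 :: complex
  assumes "Im (cnj (y2 - y1) * (y3 - y1)) \<noteq> 0"
  obtains c r where "r > 0" "cmod (y1 - c) = r" "cmod (y2 - c) = r" "cmod (y3 - c) = r"
proof -
  define a b where "a = y2 - y1" and "b = y3 - y1"
  define D where "D = Re a * Im b - Im a * Re b"
  have D: "D \<noteq> 0"
    using assms by (simp add: D_def a_def b_def algebra_simps)
  \<comment> \<open>Cramer's rule for \<open>2 \<langle>a, c0\<rangle> = |a|\<^sup>2\<close>, \<open>2 \<langle>b, c0\<rangle> = |b|\<^sup>2\<close>: the circumcentre of \<open>0, a, b\<close>\<close>
  define c0 where "c0 = Complex (((cmod a)\<^sup>2 * Im b - (cmod b)\<^sup>2 * Im a) / (2 * D))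
                              ((Re a * (cmod b)\<^sup>2 - Re b * (cmod a)\<^sup>2) / (2 * D))"
  have "2 * inner z c0 = (Re z * ((cmod a)\<^sup>2 * Im b - (cmod b)\<^sup>2 * Im a)
                         + Im z * (Re a * (cmod b)\<^sup>2 - Re b * (cmod a)\<^sup>2)) / D" for z
    using D by (simp add: c0_def inner_complex_def add_divide_distrib)
  moreover have "Re a * ((cmod a)\<^sup>2 * Im b - (cmod b)\<^sup>2 * Im a)
                 + Im a * (Re a * (cmod b)\<^sup>2 - Re b * (cmod a)\<^sup>2) = (cmod a)\<^sup>2 * D"
    "Re b * ((cmod a)\<^sup>2 * Im b - (cmod b)\<^sup>2 * Im a)
                 + Im b * (Re a * (cmod b)\<^sup>2 - Re b * (cmod a)\<^sup>2) = (cmod b)\<^sup>2 * D"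
    by (simp_all add: D_def algebra_simps)
  ultimately have "2 * inner a c0 = (cmod a)\<^sup>2" "2 * inner b c0 = (cmod b)\<^sup>2"
    using D by simp_all
  then have on_circle: "cmod (a - c0) = cmod c0" "cmod (b - c0) = cmod c0"
    by (simp_all add: norm_diff_eq_norm_iff)
  have "c0 \<noteq> 0"
  proof
    assume "c0 = 0"
    then have "a = 0"
      using on_circle by simp
    then show False
      using D by (simp add: D_def)
  qed
  then show ?thesis
    using on_circle by (intro that[of "cmod c0" "y1 + c0"]) (simp_all add: a_def b_def norm_minus_commute algebra_simps)
qed

lemma quad_form_nonneg_if_non_collinear_3:
  fixes A :: "complex^3^3"
  assumes herm: "hermitian_op A" and u: "u \<in> torus" and ker: "A *v u = 0"
    and torus_nonneg: "\<forall>w\<in>torus. 0 \<le> Re (quad_form A w)"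
    and non_collinear: "Im (cnj (cnj (u$2) * v$2 - cnj (u$1) * v$1) * (cnj (u$3) * v$3 - cnj (u$1) * v$1)) \<noteq> 0"
  shows "0 \<le> Re (quad_form A v)"
proof -
  obtain c r where "r > 0" "cmod (cnj (u$1) * v$1 - c) = r" "cmod (cnj (u$2) * v$2 - c) = r"
    "cmod (cnj (u$3) * v$3 - c) = r"
    using non_collinear_concyclic[OF non_collinear] by blast
  then have "cmod (cnj (u$i) * v$i - c) = r" for i
    using exhaust_3[of i] by auto
  then show ?thesis
    using quad_form_nonneg_if_concyclic[OF herm u ker torus_nonneg \<open>r > 0\<close>] by blast
qed

lemma quad_form_nonneg_if_torus_nonneg_3:
  fixes A :: "complex^3^3"
  assumes herm: "hermitian_op A" and u: "u \<in> torus" and ker: "A *v u = 0"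
    and torus_nonneg: "\<forall>w\<in>torus. 0 \<le> Re (quad_form A w)"
  shows "0 \<le> Re (quad_form A v)"
proof -
  note non_collinear = quad_form_nonneg_if_non_collinear_3[OF herm u ker torus_nonneg]
  define a b where "a = cnj (u$2) * v$2 - cnj (u$1) * v$1" and "b = cnj (u$3) * v$3 - cnj (u$1) * v$1"
  show ?thesis
  proof (cases "Im (cnj a * b) = 0")
    case False
    then show ?thesis
      using non_collinear by (simp add: a_def b_def)
  next
    case True
    \<comment> \<open>moves the points \<open>cnj u\<^sub>i v\<^sub>i\<close> by \<open>(0, q, \<i>q)\<close>, which breaks collinearity
      for all but two values of \<open>q\<close>\<close>
    define p :: "complex^3" where "p = vector [0, u$2, \<i> * u$3]"
    define f where "f q = Re (quad_form A (v + complex_of_real q *s p))" for q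
    have f_nonneg: "0 \<le> f q" if "q \<noteq> 0" "q \<noteq> - (Re a + Im b)" for q
    proof -
      have "cnj (u$2) * (v + complex_of_real q *s p)$2 - cnj (u$1) * (v + complex_of_real q *s p)$1 = a + q"
        "cnj (u$3) * (v + complex_of_real q *s p)$3 - cnj (u$1) * (v + complex_of_real q *s p)$1 = b + \<i> * q"
        using torus_cnj_mult_self[OF u] by (simp_all add: p_def a_def b_def algebra_simps)
      moreover have "Im (cnj (a + q) * (b + \<i> * q)) = q * (q + Re a + Im b)"
        using True by (simp add: algebra_simps power2_eq_square)
      ultimately show ?thesis
        unfolding f_def using that by (intro non_collinear) (auto simp: add_eq_0_iff)
    qed
    have "isCont f 0"
      unfolding f_def quad_form_def by simp
    then have "(f \<longlongrightarrow> f 0) (at 0)"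
      by (simp add: continuous_at)
    moreover have "eventually (\<lambda>q. 0 \<le> f q) (at 0)"
      using eventually_conj[OF eventually_neq_at_within[of 0] eventually_neq_at_within[of "- (Re a + Im b)"]]
      by (rule eventually_mono) (use f_nonneg in blast)
    ultimately have "0 \<le> f 0"
      by (rule tendsto_lowerbound) simp
    then show ?thesis
      by (simp add: f_def)
  qed
qed

section \<open>Robustness of coherence\<close>

definition robustness_weights :: "complex^'n^'n \<Rightarrow> real set" where
  "robustness_weights \<rho> =
     {s. 0 \<le> s \<and> (\<exists>\<tau>. density_op \<tau> \<and> incoherent ((1 / (1 + s)) *\<^sub>R (\<rho> + s *\<^sub>R \<tau>)))}"

lemma quad_form_le_robustness_weight:
  assumes "density_op \<rho>" "u \<in> torus" "s \<in> robustness_weights \<rho>"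
  shows "Re (quad_form \<rho> u) \<le> 1 + s"
proof -
  obtain \<tau> where s: "0 \<le> s" and \<tau>: "density_op \<tau>"
    and inc: "incoherent ((1 / (1 + s)) *\<^sub>R (\<rho> + s *\<^sub>R \<tau>))"
    using assms(3) unfolding robustness_weights_def by blast
  have "(\<rho> + s *\<^sub>R \<tau>)$i$j = 0" if "i \<noteq> j" for i j
  proof -
    have "((1 / (1 + s)) *\<^sub>R (\<rho> + s *\<^sub>R \<tau>))$i$j = 0"
      using inc that unfolding incoherent_def by blast
    then show ?thesis
      using s by simp
  qed
  then have "quad_form (\<rho> + s *\<^sub>R \<tau>) u = trace_op (\<rho> + s *\<^sub>R \<tau>)"
    using assms(2) by (rule quad_form_diagonal_torus)
  then have "quad_form \<rho> u + s * quad_form \<tau> u = 1 + s"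
    using assms(1) \<tau> by (simp add: density_op_def quad_form_add quad_form_scaleR trace_op_add trace_op_scaleR)
  from arg_cong[OF this, of Re] have "Re (quad_form \<rho> u) + s * Re (quad_form \<tau> u) = 1 + s"
    by simp
  moreover have "0 \<le> s * Re (quad_form \<tau> u)"
    using s \<tau> by (simp add: density_op_def)
  ultimately show ?thesis
    by linarith
qed

lemma gt_trace_in_robustness_weights:
  assumes \<rho>: "density_op \<rho>" and T: "psd_op T" and diag: "\<And>i j. i \<noteq> j \<Longrightarrow> (\<rho> + T)$i$j = 0"
    and s: "Re (trace_op T) < s"
  shows "s \<in> robustness_weights \<rho>"
proof -
  define t where "t = Re (trace_op T)"
  have t: "trace_op T = complex_of_real t" "0 \<le> t" "t < s"
    using trace_op_psd_op[OF T] s by (simp_all add: t_def)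
  have \<rho>': "psd_op \<rho>" "trace_op \<rho> = 1"
    using \<rho> by (simp_all add: density_op_iff_psd_op)
  define c where "c = (s - t) / (1 + t)"
  have c_mult: "c * (1 + t) = s - t"
    using t by (simp add: c_def)
  have c: "0 \<le> c" "t + c * (1 + t) = s" "(1 + c) / (1 + s) = 1 / (1 + t)"
  proof -
    show "0 \<le> c"
      unfolding c_def using t by (intro divide_nonneg_nonneg) auto
    show "t + c * (1 + t) = s"
      using c_mult by simp
    have "(1 + c) * (1 + t) = 1 + s"
      using c_mult by (simp add: algebra_simps)
    moreover have "1 + s \<noteq> 0" "1 + t \<noteq> 0"
      using t by linarith+
    ultimately show "(1 + c) / (1 + s) = 1 / (1 + t)"
      by (simp add: frac_eq_eq)
  qed
  \<comment> \<open>pad \<open>T\<close> with a multiple of the diagonal state \<open>\<rho> + T\<close> until its trace is \<open>s\<close>\<close>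
  define \<tau> where "\<tau> = (1 / s) *\<^sub>R (T + c *\<^sub>R (\<rho> + T))"
  have "psd_op (T + c *\<^sub>R (\<rho> + T))"
    using T \<rho>' c by (intro psd_op_add psd_op_scaleR) auto
  moreover have "trace_op (T + c *\<^sub>R (\<rho> + T)) = complex_of_real (t + c * (1 + t))"
    by (simp add: trace_op_add trace_op_scaleR t(1) \<rho>'(2))
  ultimately have "density_op \<tau>"
    unfolding \<tau>_def using t c by (intro density_op_scaleR_inverse_trace) auto
  moreover have "(1 / (1 + s)) *\<^sub>R (\<rho> + s *\<^sub>R \<tau>) = (1 / (1 + t)) *\<^sub>R (\<rho> + T)"
  proof -
    have "\<rho> + s *\<^sub>R \<tau> = (1 + c) *\<^sub>R (\<rho> + T)"
      using t by (simp add: \<tau>_def scaleR_add_left add.assoc)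
    then show ?thesis
      using c(3) by simp
  qed
  moreover have "incoherent ((1 / (1 + t)) *\<^sub>R (\<rho> + T))"
    unfolding incoherent_def using t \<rho>' diag
    by (intro conjI density_op_scaleR_inverse_trace psd_op_add T allI impI)
       (simp_all add: trace_op_add)
  ultimately show ?thesis
    using t by (auto simp: robustness_weights_def)
qed

lemma robustness_eq_trace:
  assumes \<rho>: "density_op \<rho>" and T: "psd_op T" and diag: "\<And>i j. i \<noteq> j \<Longrightarrow> (\<rho> + T)$i$j = 0"
    and u: "u \<in> torus" and u_trace: "Re (quad_form \<rho> u) = 1 + Re (trace_op T)"
  shows "robustness \<rho> = Re (trace_op T)"
proof -
  let ?W = "robustness_weights \<rho>" and ?t = "Re (trace_op T)"
  have lower: "?t \<le> s" if "s \<in> ?W" for s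
    using quad_form_le_robustness_weight[OF \<rho> u that] u_trace by simp
  have upper: "s \<in> ?W" if "?t < s" for s
    using gt_trace_in_robustness_weights[OF \<rho> T diag that] .
  have "Inf ?W = ?t"
  proof (rule antisym)
    show "Inf ?W \<le> ?t"
    proof (rule dense_ge)
      show "Inf ?W \<le> s" if "?t < s" for s
        using upper[OF that] lower by (intro cInf_lower) (auto simp: bdd_below_def)
    qed
    show "?t \<le> Inf ?W"
      using upper[of "?t + 1"] lower by (intro cInf_greatest) auto
  qed
  then show ?thesis
    by (simp add: robustness_def robustness_weights_def)
qed

theorem theorem3:
  fixes \<rho> :: "complex^3^3"
  assumes "density_op \<rho>"
  shows "coherence_fraction \<rho> = robustness_bar \<rho>"
proof -
  have herm: "hermitian_op \<rho>" and tr: "trace_op \<rho> = 1"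
    using assms by (simp_all add: density_op_def)
  obtain u where u: "u \<in> torus" and max: "\<And>w. w \<in> torus \<Longrightarrow> Re (quad_form \<rho> w) \<le> Re (quad_form \<rho> u)"
    using quad_form_attains_max_on_torus[of \<rho>] by blast
  define T where "T = phase_laplacian \<rho> u"
  have T_herm: "hermitian_op T"
    unfolding T_def using herm by (rule hermitian_op_phase_laplacian)
  moreover have "T *v u = 0"
    unfolding T_def using u quad_form_torus_max_stationary[OF herm u max] by (rule phase_laplacian_kernel)
  moreover have "\<forall>w\<in>torus. 0 \<le> Re (quad_form T w)"
    using max by (simp add: T_def Re_quad_form_phase_laplacian)
  ultimately have "psd_op T"
    using quad_form_nonneg_if_torus_nonneg_3[OF T_herm u] by (simp add: psd_op_def)
  then have "robustness \<rho> = Re (quad_form \<rho> u) - 1"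
    using robustness_eq_trace[OF assms _ phase_laplacian_add_offdiag u] trace_op_phase_laplacian[of \<rho> u] tr
    by (simp add: T_def)
  moreover have "coherence_fraction \<rho> = Re (quad_form \<rho> u) / 3"
    using coherence_fraction_eq_max[OF u max] by simp
  ultimately show ?thesis
    by (simp add: robustness_bar_def)
qed

end
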